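(* Let $a$ be a positive integer with $\sigma(a)\neq 2a$, and let $b,c$ be coprime integers with $c>0$ and $\dfrac{b}{c}=\dfrac{a}{2a-\sigma(a)}$. Let $x,y$ be positive integers such that $p=x-1$, $q=y-1$ and $r=xy-1$ are primes, $p\neq q$, and none of $p,q,r$ divides $a$. If $(cx-b)(cy-b)=b^2$, then $a(x-1)(y-1)$ and $a(xy-1)$ are amicable numbers.
   Context: For a positive integer $N$, $\sigma(N)$ denotes the sum of all positive divisors of $N$. Positive integers $M,N$ are amicable if $\sigma(M)-M=N$ and $\sigma(N)-N=M$. *)

theory Defs
  imports "HOL-Number_Theory.Number_Theory"
begin

definition sigma :: "nat \<Rightarrow> nat" where
  "sigma N = (\<Sum>d \<in> {d. d dvd N}. d)"

definition amicable :: "nat \<Rightarrow> nat \<Rightarrow> bool" where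
  "amicable M N \<longleftrightarrow> M > 0 \<and> N > 0 \<and>
     int (sigma M) - int M = int N \<and> int (sigma N) - int N = int M"

end

theory Submission
  imports Defs
begin

text \<open>Since \<open>p, q, r\<close> are primes not dividing \<open>a\<close>,
  both \<open>\<sigma>(apq) = \<sigma>(a)(p+1)(q+1)\<close> and \<open>\<sigma>(ar) = \<sigma>(a)(r+1)\<close> equal \<open>\<sigma>(a)xy\<close>, so the two numbers
  are amicable iff \<open>\<sigma>(a)xy = apq + ar\<close>, i.e. iff \<open>(2a - \<sigma>(a))xy = a(x+y)\<close>. Expanding
  \<open>(cx - b)(cy - b) = b\<^sup>2\<close> gives \<open>cxy = b(x+y)\<close>, which is this identity scaled by \<open>b/a\<close>.\<close>

lemma sigma_mult_prime:
  assumes "m > 0" "prime (p::nat)" "\<not> p dvd m"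
  shows "sigma (m * p) = sigma m * (p + 1)"
proof -
  let ?D = "{d. d dvd m}"
  have "p > 0" using assms(2) prime_gt_0_nat by blast
  have divisors: "{d. d dvd m * p} = ?D \<union> (\<lambda>d. p * d) ` ?D"
  proof (intro equalityI subsetI)
    fix d assume "d \<in> {d. d dvd m * p}"
    hence d: "d dvd m * p" by simp
    show "d \<in> ?D \<union> (\<lambda>d. p * d) ` ?D"
    proof (cases "p dvd d")
      case True
      then obtain e where e: "d = p * e" by blast
      with d \<open>p > 0\<close> have "e dvd m" by (simp add: mult.commute)
      thus ?thesis using e by blast
    next
      case False
      hence "coprime d p" using assms(2) by (metis coprime_commute prime_imp_coprime)
      thus ?thesis using d coprime_dvd_mult_left_iff by blast
    qed
  qed (auto simp: mult.commute)
  have "?D \<inter> (\<lambda>d. p * d) ` ?D = {}" using assms(3) by auto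
  moreover have "inj_on (\<lambda>d. p * d) ?D" using \<open>p > 0\<close> by (auto simp: inj_on_def)
  moreover have "finite ?D" using assms(1) by simp
  ultimately have "sigma (m * p) = sigma m + p * sigma m"
    unfolding sigma_def divisors
    by (simp add: sum.union_disjoint sum.reindex sum_distrib_left)
  thus ?thesis by (simp add: algebra_simps)
qed

lemma amicable_if_sigma_eq_sum:
  assumes "M > 0" "N > 0" "sigma M = M + N" "sigma N = M + N"
  shows "amicable M N"
  using assms unfolding amicable_def by simp

lemma amicable_mult_primes:
  fixes a p q r :: nat
  assumes "a > 0" "prime p" "prime q" "prime r" "p \<noteq> q"
    and "\<not> p dvd a" "\<not> q dvd a" "\<not> r dvd a"
    and "(p + 1) * (q + 1) = r + 1"
    and "sigma a * (r + 1) = a * p * q + a * r"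
  shows "amicable (a * p * q) (a * r)"
proof (rule amicable_if_sigma_eq_sum)
  have "\<not> q dvd a * p" using assms(2,3,5,7) by (metis prime_dvd_mult_iff primes_dvd_imp_eq)
  hence "sigma (a * p * q) = sigma (a * p) * (q + 1)"
    using assms(1-3) by (simp add: sigma_mult_prime prime_gt_0_nat)
  also have "\<dots> = sigma a * ((p + 1) * (q + 1))"
    using sigma_mult_prime[OF assms(1,2,6)] by (simp only: mult.assoc)
  finally show "sigma (a * p * q) = a * p * q + a * r" using assms(9,10) by simp
  show "sigma (a * r) = a * p * q + a * r"
    using sigma_mult_prime[OF assms(1,4,8)] assms(10) by simp
qed (use assms prime_gt_0_nat in simp_all)

lemma deficiency_balance_imp_sigma_eq:
  fixes a s x y :: nat
  assumes "x > 0" "y > 0"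
    and "(2 * of_nat a - of_nat s) * (of_nat x * of_nat y) = (of_nat a * (of_nat x + of_nat y) :: rat)"
  shows "s * (x * y) = a * (x - 1) * (y - 1) + a * (x * y - 1)"
proof -
  have "(of_nat (s * (x * y)) :: rat)
      = of_nat a * ((of_nat x - 1) * (of_nat y - 1)) + of_nat a * (of_nat x * of_nat y - 1)"
    using assms(3) by (simp add: algebra_simps)
  also have "\<dots> = of_nat (a * (x - 1) * (y - 1) + a * (x * y - 1))"
    using assms(1,2) by (simp add: of_nat_diff)
  finally show ?thesis by (simp only: of_nat_eq_iff)
qed

lemma shifted_product_eq_square_iff:
  fixes b c x y :: "'a::idom"
  assumes "c \<noteq> 0"
  shows "(c * x - b) * (c * y - b) = b\<^sup>2 \<longleftrightarrow> c * (x * y) = b * (x + y)"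
proof -
  have "(c * x - b) * (c * y - b) - b\<^sup>2 = c * (c * (x * y) - b * (x + y))"
    by (simp add: algebra_simps power2_eq_square)
  thus ?thesis using assms by (metis eq_iff_diff_eq_0 mult_eq_0_iff)
qed

lemma rescale_by_equal_ratio:
  fixes a b c d x y :: "'a::field"
  assumes "b / c = a / d" "c \<noteq> 0" "d \<noteq> 0" "c * (x * y) = b * (x + y)"
  shows "d * (x * y) = a * (x + y)"
proof -
  have "b * d = a * c" using assms(1-3) by (simp add: field_simps)
  hence "c * (d * (x * y)) = c * (a * (x + y))"
    using assms(4) by (metis mult.assoc mult.left_commute)
  thus ?thesis using assms(2) by simp
qed

theorem mainTheorem4:
  fixes a x y :: nat and b c :: int
  assumes "a > 0" and "sigma a \<noteq> 2 * a"
    and "coprime b c" and "c > 0"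
    and "(of_int b / of_int c :: rat) = of_nat a / (2 * of_nat a - of_nat (sigma a))"
    and "x > 0" and "y > 0"
    and "prime (x - 1)" and "prime (y - 1)" and "prime (x * y - 1)"
    and "x - 1 \<noteq> y - 1"
    and "\<not> (x - 1) dvd a" and "\<not> (y - 1) dvd a" and "\<not> (x * y - 1) dvd a"
    and "(c * int x - b) * (c * int y - b) = b ^ 2"
  shows "amicable (a * (x - 1) * (y - 1)) (a * (x * y - 1))"
proof -
  define p q r where "p = x - 1" and "q = y - 1" and "r = x * y - 1"
  have primes: "prime p" "prime q" "prime r" using assms(8-10) by (simp_all add: p_def q_def r_def)
  hence "p \<ge> 2" "q \<ge> 2" "r \<ge> 2" by (simp_all add: prime_ge_2_nat)
  hence x: "x = p + 1" and y: "y = q + 1" and xy: "x * y = r + 1" by (simp_all add: p_def q_def r_def)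
  have "(of_int c * of_nat x - of_int b) * (of_int c * of_nat y - of_int b) = (of_int b ^ 2 :: rat)"
    using arg_cong[OF assms(15), of "of_int :: int \<Rightarrow> rat"] by simp
  hence "(of_int c :: rat) * (of_nat x * of_nat y) = of_int b * (of_nat x + of_nat y)"
    using assms(4) shifted_product_eq_square_iff[of "of_int c :: rat"] by simp
  moreover have "(2 * of_nat a - of_nat (sigma a) :: rat) \<noteq> 0"
    using assms(2) by (metis eq_iff_diff_eq_0 of_nat_eq_iff of_nat_mult of_nat_numeral)
  ultimately have "(2 * of_nat a - of_nat (sigma a)) * (of_nat x * of_nat y)
      = (of_nat a * (of_nat x + of_nat y) :: rat)"
    using assms(4) rescale_by_equal_ratio[OF assms(5)] by simp
  hence "sigma a * (x * y) = a * p * q + a * r"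
    using deficiency_balance_imp_sigma_eq assms(6,7) by (simp only: p_def q_def r_def)
  hence "sigma a * (r + 1) = a * p * q + a * r" by (simp only: xy)
  moreover have "p \<noteq> q" "\<not> p dvd a" "\<not> q dvd a" "\<not> r dvd a"
    using assms(11-14) by (simp_all add: p_def q_def r_def)
  moreover have "(p + 1) * (q + 1) = r + 1" using x y xy by simp
  ultimately have "amicable (a * p * q) (a * r)"
    using amicable_mult_primes assms(1) primes by blast
  thus ?thesis by (simp only: p_def q_def r_def)
qed

end
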